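(* Let $\mathcal{A}$ be an ARI-algebra of matrices over a countable index set $K$, with class $W$ of $\mathcal{A}$-admissible weights, and let $\mu\in W$. Let $B$ be a matrix over $K$ such that (i) $B^\mu=\operatorname{diag}(\mu)\, B\, \operatorname{diag}(1/\mu)\in\mathcal{A}$, and (ii) $B$ is (bounded and) invertible on $\ell^2_\mu(K)$. Then $B$ is bounded and invertible on $\ell^p_w(K)$ for every $1\le p\le\infty$ and every weight of the form $w=\mu\cdot m$ with $m\in W$; in particular, $B$ is bounded and invertible on every $\ell^p(K)$, $1\le p\le \infty$.
   Context: $K$ is a countable index set. For a strictly positive weight $m=(m_k)_{k\in K}$, $\ell^p_m(K)$ is the space of sequences $c$ with $\|c\|_{\ell^p_m}=\|(m_kc_k)_k\|_{\ell^p}<\infty$. For a sequence $\mu$, $\operatorname{diag}(\mu)$ is the diagonal matrix with entries $\mu_k$, and for a matrix $B$ over $K$ and a positive weight $\mu$ one writes $B^\mu:=\operatorname{diag}(\mu)\,B\,\operatorname{diag}(1/\mu)$. An ARI-algebra is a Banach $*$-algebra $\mathcal{A}$ of matrices over $K$ (with $*$ the matrix adjoint) together with a class $W$ of positive weights on $K$ (called $\mathcal{A}$-admissible weights) such that: (ARI1) every $A\in\mathcal{A}$ is bounded on $\ell^p_m(K)$ for all $p\in[1,\infty]$ and all $m\in W$, the constant weight $1$ belongs to $W$, and $m\in W$ implies $1/m\in W$; (ARI2) $\mathcal{A}$ is inverse-closed in $\mathcal{B}(\ell^2(K))$, i.e. if $A\in\mathcal{A}$ is invertible on $\ell^2(K)$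 then $A^{-1}\in\mathcal{A}$. *)

theory Defs
  imports "HOL-Analysis.Analysis"
begin

text \<open>Index set K: a countable type 'k.\<close>

type_synonym 'k mat = "'k \<Rightarrow> 'k \<Rightarrow> complex"
type_synonym 'k seq = "'k \<Rightarrow> complex"
type_synonym 'k weight = "'k \<Rightarrow> real"

definition pos_weight :: "'k weight \<Rightarrow> bool" where
  "pos_weight m \<longleftrightarrow> (\<forall>k. m k > 0)"

definition lp_mem :: "ereal \<Rightarrow> 'k weight \<Rightarrow> 'k seq \<Rightarrow> bool" where
  "lp_mem p m c \<longleftrightarrow>
     (if p = \<infinity> then bdd_above (range (\<lambda>k. norm (complex_of_real (m k) * c k)))
      else (\<lambda>k. norm (complex_of_real (m k) * c k) powr real_of_ereal p) summable_on UNIV)"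

definition lp_norm :: "ereal \<Rightarrow> 'k weight \<Rightarrow> 'k seq \<Rightarrow> real" where
  "lp_norm p m c =
     (if p = \<infinity> then (SUP k. norm (complex_of_real (m k) * c k))
      else (\<Sum>\<^sub>\<infinity>k. norm (complex_of_real (m k) * c k) powr real_of_ereal p)
             powr (1 / real_of_ereal p))"

definition mat_apply :: "'k mat \<Rightarrow> 'k seq \<Rightarrow> 'k seq" where
  "mat_apply A c = (\<lambda>i. \<Sum>\<^sub>\<infinity>j. A i j * c j)"

definition mat_mult :: "'k mat \<Rightarrow> 'k mat \<Rightarrow> 'k mat" where
  "mat_mult A B = (\<lambda>i j. \<Sum>\<^sub>\<infinity>k. A i k * B k j)"

definition mat_adj :: "'k mat \<Rightarrow> 'k mat" where
  "mat_adj A = (\<lambda>i j. cnj (A j i))"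

definition diag_conj :: "'k weight \<Rightarrow> 'k mat \<Rightarrow> 'k mat" where
  "diag_conj \<mu> B = (\<lambda>i j. complex_of_real (\<mu> i) * B i j * complex_of_real (1 / \<mu> j))"

definition bounded_on :: "ereal \<Rightarrow> 'k weight \<Rightarrow> 'k mat \<Rightarrow> bool" where
  "bounded_on p m A \<longleftrightarrow>
     (\<exists>C. \<forall>c. lp_mem p m c \<longrightarrow>
        (\<forall>i. (\<lambda>j. A i j * c j) summable_on UNIV) \<and>
        lp_mem p m (mat_apply A c) \<and>
        lp_norm p m (mat_apply A c) \<le> C * lp_norm p m c)"

definition invertible_on :: "ereal \<Rightarrow> 'k weight \<Rightarrow> 'k mat \<Rightarrow> bool" where
  "invertible_on p m A \<longleftrightarrow>
     bounded_on p m A \<and>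
     bij_betw (mat_apply A) {c. lp_mem p m c} {c. lp_mem p m c} \<and>
     (\<exists>C. \<forall>c. lp_mem p m c \<longrightarrow> lp_norm p m c \<le> C * lp_norm p m (mat_apply A c))"

text \<open>The matrix of the inverse operator of A on l^p_m (columns = images of unit vectors).\<close>
definition inv_matrix :: "ereal \<Rightarrow> 'k weight \<Rightarrow> 'k mat \<Rightarrow> 'k mat" where
  "inv_matrix p m A = (\<lambda>i j. inv_into {c. lp_mem p m c} (mat_apply A)
                                 (\<lambda>k. if k = j then 1 else 0) i)"

definition banach_star_algebra :: "'k mat set \<Rightarrow> ('k mat \<Rightarrow> real) \<Rightarrow> bool" where
  "banach_star_algebra \<A> nrm \<longleftrightarrow>
     (\<lambda>i j. 0) \<in> \<A> \<and>
     (\<forall>A\<in>\<A>. \<forall>B\<in>\<A>. (\<lambda>i j. A i j + B i j) \<in> \<A>) \<and>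
     (\<forall>A\<in>\<A>. \<forall>a::complex. (\<lambda>i j. a * A i j) \<in> \<A>) \<and>
     (\<forall>A\<in>\<A>. \<forall>B\<in>\<A>. mat_mult A B \<in> \<A>) \<and>
     (\<forall>A\<in>\<A>. mat_adj A \<in> \<A>) \<and>
     (\<forall>A\<in>\<A>. nrm A \<ge> 0 \<and> (nrm A = 0 \<longleftrightarrow> A = (\<lambda>i j. 0))) \<and>
     (\<forall>A\<in>\<A>. \<forall>B\<in>\<A>. nrm (\<lambda>i j. A i j + B i j) \<le> nrm A + nrm B) \<and>
     (\<forall>A\<in>\<A>. \<forall>a::complex. nrm (\<lambda>i j. a * A i j) = norm a * nrm A) \<and>
     (\<forall>A\<in>\<A>. \<forall>B\<in>\<A>. nrm (mat_mult A B) \<le> nrm A * nrm B) \<and>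
     (\<forall>A\<in>\<A>. nrm (mat_adj A) = nrm A) \<and>
     (\<forall>X::nat \<Rightarrow> 'k mat. (\<forall>n. X n \<in> \<A>) \<and>
        (\<forall>e>0. \<exists>N. \<forall>n\<ge>N. \<forall>n'\<ge>N. nrm (\<lambda>i j. X n i j - X n' i j) < e) \<longrightarrow>
        (\<exists>L\<in>\<A>. (\<lambda>n. nrm (\<lambda>i j. X n i j - L i j)) \<longlonglongrightarrow> 0))"

definition ari_algebra :: "'k mat set \<Rightarrow> ('k mat \<Rightarrow> real) \<Rightarrow> 'k weight set \<Rightarrow> bool" where
  "ari_algebra \<A> nrm W \<longleftrightarrow>
     banach_star_algebra \<A> nrm \<and>
     (\<forall>m\<in>W. pos_weight m) \<and>
     \<comment> \<open>ARI1\<close>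
     (\<forall>A\<in>\<A>. \<forall>p::ereal. 1 \<le> p \<longrightarrow> (\<forall>m\<in>W. bounded_on p m A)) \<and>
     (\<lambda>k. 1) \<in> W \<and>
     (\<forall>m\<in>W. (\<lambda>k. 1 / m k) \<in> W) \<and>
     \<comment> \<open>ARI2\<close>
     (\<forall>A\<in>\<A>. invertible_on 2 (\<lambda>k. 1) A \<longrightarrow> inv_matrix 2 (\<lambda>k. 1) A \<in> \<A>)"

end

theory Submission
  imports Defs
begin

(* Conjugation by diag(\<mu>) identifies l^p_{\<mu> m} with l^p_m, so it suffices to show that
   A = diag(\<mu>) B diag(1/\<mu>) is invertible on every l^p_m with m admissible. By (ARI2) the
   matrix C of the l^2-inverse of A lies in the algebra, so A and C are bounded on every l^p_m
   by (ARI1). Boundedness on l^\<infinity>_m implies a weighted row-sum bound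
   m_j \<Sum>_k |X_jk| / m_k \<le> M, which makes the double series in X (Y c) absolutely convergent
   for c in l^\<infinity>_m, a space containing every l^p_m. Hence the matrix identities AC = CA = I
   become operator identities on every l^p_m. *)

definition weight_scale :: "'k weight \<Rightarrow> 'k seq \<Rightarrow> 'k seq" where
  "weight_scale \<mu> c = (\<lambda>k. complex_of_real (\<mu> k) * c k)"

lemma weight_scale_mult:
  "complex_of_real (\<mu> k * m k) * c k = complex_of_real (m k) * weight_scale \<mu> c k"
  by (simp add: weight_scale_def mult_ac)

lemma lp_mem_weight_mult: "lp_mem p (\<lambda>k. \<mu> k * m k) c \<longleftrightarrow> lp_mem p m (weight_scale \<mu> c)"
  unfolding lp_mem_def by (simp only: weight_scale_mult)

lemma lp_norm_weight_mult: "lp_norm p (\<lambda>k. \<mu> k * m k) c = lp_norm p m (weight_scale \<mu> c)"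
  unfolding lp_norm_def by (simp only: weight_scale_mult)

lemma pos_weight_nonzero: "pos_weight \<mu> \<Longrightarrow> \<mu> k \<noteq> 0"
  unfolding pos_weight_def by (metis less_irrefl)

lemma weight_scale_inverse:
  assumes "pos_weight \<mu>"
  shows "weight_scale (\<lambda>k. 1 / \<mu> k) (weight_scale \<mu> c) = c"
    and "weight_scale \<mu> (weight_scale (\<lambda>k. 1 / \<mu> k) c) = c"
  using pos_weight_nonzero[OF assms] by (simp_all add: weight_scale_def fun_eq_iff)

lemma diag_conj_row:
  assumes "pos_weight \<mu>"
  shows "diag_conj \<mu> B i j * weight_scale \<mu> c j = complex_of_real (\<mu> i) * (B i j * c j)"
  using pos_weight_nonzero[OF assms] by (simp add: diag_conj_def weight_scale_def field_simps)

lemma mat_apply_diag_conj: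
  assumes "pos_weight \<mu>"
  shows "mat_apply (diag_conj \<mu> B) (weight_scale \<mu> c) = weight_scale \<mu> (mat_apply B c)"
  unfolding mat_apply_def diag_conj_row[OF assms]
  by (simp add: weight_scale_def infsum_cmult_right')

lemma diag_conj_inverse:
  assumes "pos_weight \<mu>"
  shows "diag_conj (\<lambda>k. 1 / \<mu> k) (diag_conj \<mu> B) = B"
  using pos_weight_nonzero[OF assms] by (simp add: diag_conj_def fun_eq_iff)

lemma bounded_on_diag_conj:
  assumes \<mu>: "pos_weight \<mu>" and bounded: "bounded_on p m (diag_conj \<mu> B)"
  shows "bounded_on p (\<lambda>k. \<mu> k * m k) B"
proof -
  obtain C where C: "\<forall>d. lp_mem p m d \<longrightarrow>
      (\<forall>i. (\<lambda>j. diag_conj \<mu> B i j * d j) summable_on UNIV) \<and>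
      lp_mem p m (mat_apply (diag_conj \<mu> B) d) \<and>
      lp_norm p m (mat_apply (diag_conj \<mu> B) d) \<le> C * lp_norm p m d"
    using bounded unfolding bounded_on_def by blast
  have "(\<forall>i. (\<lambda>j. B i j * c j) summable_on UNIV) \<and>
      lp_mem p (\<lambda>k. \<mu> k * m k) (mat_apply B c) \<and>
      lp_norm p (\<lambda>k. \<mu> k * m k) (mat_apply B c) \<le> C * lp_norm p (\<lambda>k. \<mu> k * m k) c"
    if c: "lp_mem p (\<lambda>k. \<mu> k * m k) c" for c
  proof -
    have d: "lp_mem p m (weight_scale \<mu> c)"
      using c by (simp add: lp_mem_weight_mult)
    have "(\<lambda>j. diag_conj \<mu> B i j * weight_scale \<mu> c j) summable_on UNIV" for i
      using C d by blast
    then have "(\<lambda>j. complex_of_real (\<mu> i) * (B i j * c j)) summable_on UNIV" for i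
      unfolding diag_conj_row[OF \<mu>] .
    then have "(\<lambda>j. B i j * c j) summable_on UNIV" for i
      using pos_weight_nonzero[OF \<mu>] by (simp add: summable_on_cmult_right')
    then show ?thesis
      using C d by (simp add: lp_mem_weight_mult lp_norm_weight_mult flip: mat_apply_diag_conj[OF \<mu>])
  qed
  then show ?thesis
    unfolding bounded_on_def by blast
qed

lemma invertible_on_diag_conj:
  assumes \<mu>: "pos_weight \<mu>" and invertible: "invertible_on p m (diag_conj \<mu> B)"
  shows "invertible_on p (\<lambda>k. \<mu> k * m k) B"
proof -
  define S where "S = {c. lp_mem p m c}"
  define S\<mu> where "S\<mu> = {c. lp_mem p (\<lambda>k. \<mu> k * m k) c}"
  have scale: "bij_betw (weight_scale \<mu>) S\<mu> S"
    by (rule bij_betw_byWitness[where f' = "weight_scale (\<lambda>k. 1 / \<mu> k)"])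
      (auto simp: S_def S\<mu>_def lp_mem_weight_mult weight_scale_inverse[OF \<mu>])
  have unscale: "bij_betw (weight_scale (\<lambda>k. 1 / \<mu> k)) S S\<mu>"
    by (rule bij_betw_byWitness[where f' = "weight_scale \<mu>"])
      (auto simp: S_def S\<mu>_def lp_mem_weight_mult weight_scale_inverse[OF \<mu>])
  have "bij_betw (mat_apply (diag_conj \<mu> B)) S S"
    using invertible unfolding invertible_on_def S_def by blast
  then have "bij_betw (weight_scale (\<lambda>k. 1 / \<mu> k) \<circ> mat_apply (diag_conj \<mu> B) \<circ> weight_scale \<mu>) S\<mu> S\<mu>"
    using scale unscale by (blast intro: bij_betw_trans)
  moreover have "weight_scale (\<lambda>k. 1 / \<mu> k) \<circ> mat_apply (diag_conj \<mu> B) \<circ> weight_scale \<mu> = mat_apply B"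
    by (simp add: fun_eq_iff mat_apply_diag_conj[OF \<mu>] weight_scale_inverse[OF \<mu>])
  ultimately have bij: "bij_betw (mat_apply B) S\<mu> S\<mu>"
    by simp
  obtain C where "\<forall>d. lp_mem p m d \<longrightarrow> lp_norm p m d \<le> C * lp_norm p m (mat_apply (diag_conj \<mu> B) d)"
    using invertible unfolding invertible_on_def by blast
  then have "\<forall>c. lp_mem p (\<lambda>k. \<mu> k * m k) c \<longrightarrow>
      lp_norm p (\<lambda>k. \<mu> k * m k) c \<le> C * lp_norm p (\<lambda>k. \<mu> k * m k) (mat_apply B c)"
    by (simp add: lp_mem_weight_mult lp_norm_weight_mult flip: mat_apply_diag_conj[OF \<mu>])
  then show ?thesis
    using bounded_on_diag_conj[OF \<mu>] invertible bij unfolding invertible_on_def S\<mu>_def by blast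
qed

lemma lp_infinity_bound:
  assumes "\<And>k. norm (complex_of_real (m k) * c k) \<le> b"
  shows "lp_mem \<infinity> m c" and "lp_norm \<infinity> m c \<le> b"
  using assms by (auto simp: lp_mem_def lp_norm_def intro!: bdd_aboveI2 cSUP_least)

lemma norm_le_lp_norm_infinity:
  assumes "lp_mem \<infinity> m c"
  shows "norm (complex_of_real (m k) * c k) \<le> lp_norm \<infinity> m c"
  using assms by (auto simp: lp_mem_def lp_norm_def intro: cSUP_upper)

lemma lp_mem_imp_lp_mem_infinity:
  assumes p: "1 \<le> p" and c: "lp_mem p m c"
  shows "lp_mem \<infinity> m c"
proof (cases "p = \<infinity>")
  case True
  then show ?thesis using c by simp
next
  case False
  define r where "r = real_of_ereal p"
  have r: "r \<ge> 1"
    using p False unfolding r_def by (cases p) auto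
  define x where "x k = norm (complex_of_real (m k) * c k)" for k
  have summable: "(\<lambda>k. x k powr r) summable_on UNIV"
    using c False unfolding lp_mem_def x_def r_def by simp
  have "x k \<le> max 1 (\<Sum>\<^sub>\<infinity>k. x k powr r)" for k
  proof (cases "x k \<le> 1")
    case False
    then have "x k = x k powr 1" by simp
    also have "\<dots> \<le> x k powr r" using False r by (intro powr_mono) auto
    also have "\<dots> \<le> (\<Sum>\<^sub>\<infinity>k. x k powr r)"
      using finite_sum_le_infsum[OF summable, of "{k}"] by simp
    finally show ?thesis by simp
  qed simp
  then show ?thesis
    unfolding x_def by (rule lp_infinity_bound(1))
qed

definition weighted_row_bound :: "'k weight \<Rightarrow> 'k mat \<Rightarrow> real \<Rightarrow> bool" where
  "weighted_row_bound m X M \<longleftrightarrow>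
     (\<forall>j. (\<lambda>k. norm (X j k) / m k) summable_on UNIV \<and> m j * (\<Sum>\<^sub>\<infinity>k. norm (X j k) / m k) \<le> M)"

lemma mult_cnj_sgn: "(z::complex) * cnj (sgn z) = complex_of_real (norm z)"
proof (cases "z = 0")
  case False
  have "z * cnj (sgn z) = z * cnj z / complex_of_real (norm z)"
    by (simp add: sgn_div_norm scaleR_conv_of_real divide_inverse mult_ac)
  also have "\<dots> = complex_of_real (norm z)"
    using False by (simp add: complex_norm_square[symmetric] power2_eq_square)
  finally show ?thesis .
qed simp

lemma bounded_on_infinity_imp_weighted_row_bound:
  assumes m: "pos_weight m" and bounded: "bounded_on \<infinity> m X"
  shows "\<exists>M. weighted_row_bound m X M"
proof -
  obtain C where C: "\<forall>c. lp_mem \<infinity> m c \<longrightarrow>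
      (\<forall>i. (\<lambda>j. X i j * c j) summable_on UNIV) \<and>
      lp_mem \<infinity> m (mat_apply X c) \<and>
      lp_norm \<infinity> m (mat_apply X c) \<le> C * lp_norm \<infinity> m c"
    using bounded unfolding bounded_on_def by blast
  have "(\<lambda>k. norm (X j k) / m k) summable_on UNIV \<and> m j * (\<Sum>\<^sub>\<infinity>k. norm (X j k) / m k) \<le> max C 0"
    for j
  proof -
    define f where "f k = norm (X j k) / m k" for k
    \<comment> \<open>the test sequence on which row j of X attains its weighted absolute row sum\<close>
    define t where "t k = complex_of_real (1 / m k) * cnj (sgn (X j k))" for k
    have "norm (complex_of_real (m k) * t k) \<le> 1" for k
      using pos_weight_nonzero[OF m, of k] by (simp add: t_def norm_sgn)
    then have t: "lp_mem \<infinity> m t" "lp_norm \<infinity> m t \<le> 1"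
      by (rule lp_infinity_bound)+
    have f_nonneg: "f k \<ge> 0" for k
      using m unfolding pos_weight_def f_def by (simp add: less_imp_le)
    have Xt: "X j k * t k = complex_of_real (f k)" for k
      by (simp add: t_def f_def mult_cnj_sgn flip: mult.assoc)
    have "(\<lambda>k. X j k * t k) summable_on UNIV"
      using C t by blast
    then have "(\<lambda>k. norm (complex_of_real (f k))) summable_on UNIV"
      unfolding Xt by (metis summable_on_iff_abs_summable_on_complex)
    then have summable: "f summable_on UNIV"
      using f_nonneg by simp
    have "mat_apply X t j = complex_of_real (\<Sum>\<^sub>\<infinity>k. f k)"
      unfolding mat_apply_def Xt by (rule infsumI, rule has_sum_of_real, rule has_sum_infsum, fact)
    then have "m j * (\<Sum>\<^sub>\<infinity>k. f k) = norm (complex_of_real (m j) * mat_apply X t j)"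
      using m f_nonneg unfolding pos_weight_def by (simp add: norm_mult infsum_nonneg less_imp_le)
    also have "\<dots> \<le> lp_norm \<infinity> m (mat_apply X t)"
      using C t by (blast intro: norm_le_lp_norm_infinity)
    also have "\<dots> \<le> C * lp_norm \<infinity> m t"
      using C t by blast
    also have "\<dots> \<le> max C 0"
      using t order_trans[OF norm_ge_zero norm_le_lp_norm_infinity[OF t(1)]]
      by (cases "C \<ge> 0") (auto simp: mult_left_le mult_nonpos_nonneg)
    finally show ?thesis
      using summable unfolding f_def by blast
  qed
  then show ?thesis
    unfolding weighted_row_bound_def by blast
qed

lemma weighted_row_bound_abs_apply:
  assumes m: "pos_weight m" and Y: "weighted_row_bound m Y M" and c: "lp_mem \<infinity> m c"
  shows "(\<lambda>l. norm (Y k l) * norm (c l)) summable_on UNIV"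
    and "(\<Sum>\<^sub>\<infinity>l. norm (Y k l) * norm (c l)) \<le> lp_norm \<infinity> m c * M / m k"
proof -
  have m_pos: "m k > 0" for k
    using m unfolding pos_weight_def by blast
  have Y_row: "(\<lambda>l. norm (Y k l) / m l) summable_on UNIV"
    and Y_bound: "m k * (\<Sum>\<^sub>\<infinity>l. norm (Y k l) / m l) \<le> M"
    using Y unfolding weighted_row_bound_def by blast+
  define Mc where "Mc = lp_norm \<infinity> m c"
  have c_bound: "norm (c l) \<le> Mc / m l" for l
    using norm_le_lp_norm_infinity[OF c, of l] m_pos[of l]
    by (simp add: Mc_def norm_mult field_simps)
  have Mc_nonneg: "Mc \<ge> 0"
    unfolding Mc_def by (rule order_trans[OF norm_ge_zero norm_le_lp_norm_infinity[OF c]])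
  have term_bound: "norm (Y k l) * norm (c l) \<le> Mc * (norm (Y k l) / m l)" for l
    using mult_left_mono[OF c_bound norm_ge_zero, of "Y k l"] by (simp add: field_simps)
  show summable: "(\<lambda>l. norm (Y k l) * norm (c l)) summable_on UNIV"
    by (rule summable_on_comparison_test[OF summable_on_cmult_right[OF Y_row]])
      (use term_bound in auto)
  have "(\<Sum>\<^sub>\<infinity>l. norm (Y k l) * norm (c l)) \<le> (\<Sum>\<^sub>\<infinity>l. Mc * (norm (Y k l) / m l))"
    by (rule infsum_mono[OF summable summable_on_cmult_right[OF Y_row]]) (rule term_bound)
  also have "\<dots> = Mc * (\<Sum>\<^sub>\<infinity>l. norm (Y k l) / m l)"
    by (rule infsum_cmult_right')
  also have "\<dots> \<le> Mc * M / m k"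
    using mult_left_mono[OF Y_bound Mc_nonneg] m_pos[of k] by (simp add: field_simps)
  finally show "(\<Sum>\<^sub>\<infinity>l. norm (Y k l) * norm (c l)) \<le> lp_norm \<infinity> m c * M / m k"
    unfolding Mc_def .
qed

lemma mat_product_abs_summable:
  assumes m: "pos_weight m"
    and X: "weighted_row_bound m X MX" and Y: "weighted_row_bound m Y MY"
    and c: "lp_mem \<infinity> m c"
  shows "(\<lambda>(k, l). X i k * Y k l * c l) summable_on (UNIV \<times> UNIV)"
proof -
  have X_row: "(\<lambda>k. norm (X i k) / m k) summable_on UNIV"
    using X unfolding weighted_row_bound_def by blast
  define g where "g k = (\<Sum>\<^sub>\<infinity>l. norm (Y k l) * norm (c l))" for k
  have g_nonneg: "g k \<ge> 0" for k
    unfolding g_def by (rule infsum_nonneg) simp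
  have "norm (X i k) * g k \<le> (lp_norm \<infinity> m c * MY) * (norm (X i k) / m k)" for k
    using mult_left_mono[OF weighted_row_bound_abs_apply(2)[OF m Y c] norm_ge_zero, of "X i k"]
    by (simp add: g_def field_simps)
  then have "(\<lambda>k. norm (X i k) * g k) summable_on UNIV"
    by (intro summable_on_comparison_test[OF summable_on_cmult_right[OF X_row]])
      (use g_nonneg in auto)
  moreover have "((\<lambda>l. norm (X i k) * (norm (Y k l) * norm (c l))) has_sum norm (X i k) * g k) UNIV"
    for k
    unfolding g_def
    by (rule has_sum_cmult_right[OF has_sum_infsum[OF weighted_row_bound_abs_apply(1)[OF m Y c]]])
  ultimately have "(\<lambda>(k, l). norm (X i k) * (norm (Y k l) * norm (c l))) summable_on (UNIV \<times> UNIV)"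
    by (intro summable_on_SigmaI[where g = "\<lambda>k. norm (X i k) * g k"]) auto
  then have "(\<lambda>x. norm ((\<lambda>(k, l). X i k * Y k l * c l) x)) summable_on (UNIV \<times> UNIV)"
    by (simp add: case_prod_unfold norm_mult mult.assoc)
  then show ?thesis
    by (rule abs_summable_summable)
qed

lemma mat_apply_mat_mult:
  assumes m: "pos_weight m" and X: "bounded_on \<infinity> m X" and Y: "bounded_on \<infinity> m Y"
    and c: "lp_mem \<infinity> m c"
  shows "mat_apply X (mat_apply Y c) = mat_apply (mat_mult X Y) c"
proof
  fix i
  obtain MX MY where "weighted_row_bound m X MX" "weighted_row_bound m Y MY"
    using bounded_on_infinity_imp_weighted_row_bound[OF m] X Y by blast
  then have summable: "(\<lambda>(k, l). X i k * Y k l * c l) summable_on (UNIV \<times> UNIV)"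
    using mat_product_abs_summable[OF m _ _ c] by blast
  have "mat_apply X (mat_apply Y c) i = (\<Sum>\<^sub>\<infinity>k. X i k * (\<Sum>\<^sub>\<infinity>l. Y k l * c l))"
    unfolding mat_apply_def ..
  also have "\<dots> = (\<Sum>\<^sub>\<infinity>k. \<Sum>\<^sub>\<infinity>l. X i k * Y k l * c l)"
    by (simp only: mult.assoc infsum_cmult_right')
  also have "\<dots> = (\<Sum>\<^sub>\<infinity>l. \<Sum>\<^sub>\<infinity>k. X i k * Y k l * c l)"
    by (rule infsum_swap_banach[OF summable])
  also have "\<dots> = (\<Sum>\<^sub>\<infinity>l. (\<Sum>\<^sub>\<infinity>k. X i k * Y k l) * c l)"
    by (simp only: infsum_cmult_left')
  also have "\<dots> = mat_apply (mat_mult X Y) c i"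
    unfolding mat_apply_def mat_mult_def ..
  finally show "mat_apply X (mat_apply Y c) i = mat_apply (mat_mult X Y) c i" .
qed

definition unit_seq :: "'k \<Rightarrow> 'k seq" where
  "unit_seq j = (\<lambda>k. if k = j then 1 else 0)"

definition mat_one :: "'k mat" where
  "mat_one = (\<lambda>i j. if i = j then 1 else 0)"

lemma has_sum_single_support:
  fixes f :: "'a \<Rightarrow> 'b::{topological_comm_monoid_add,t2_space}"
  assumes "\<And>j. j \<noteq> i \<Longrightarrow> f j = 0"
  shows "(f has_sum f i) UNIV"
  by (rule has_sum_finite_neutralI[of "{i}"]) (use assms in auto)

lemma mat_apply_unit_seq: "mat_apply A (unit_seq j) = (\<lambda>i. A i j)"
proof
  fix i
  have "((\<lambda>l. A i l * unit_seq j l) has_sum A i j * unit_seq j j) UNIV"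
    by (rule has_sum_single_support) (simp add: unit_seq_def)
  then show "mat_apply A (unit_seq j) i = A i j"
    unfolding mat_apply_def by (simp add: infsumI unit_seq_def)
qed

lemma mat_apply_mat_one: "mat_apply mat_one c = c"
proof
  fix i
  have "((\<lambda>j. mat_one i j * c j) has_sum mat_one i i * c i) UNIV"
    by (rule has_sum_single_support) (simp add: mat_one_def)
  then show "mat_apply mat_one c i = c i"
    unfolding mat_apply_def by (simp add: infsumI mat_one_def)
qed

lemma mat_mult_column: "mat_mult A C i j = mat_apply A (\<lambda>k. C k j) i"
  by (simp add: mat_mult_def mat_apply_def)

lemma mat_one_column: "(\<lambda>i. mat_one i j) = unit_seq j"
  by (simp add: mat_one_def unit_seq_def fun_eq_iff)

lemma lp_mem_unit_seq: "lp_mem p m (unit_seq j)"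
proof (cases "p = \<infinity>")
  case True
  have "norm (complex_of_real (m k) * unit_seq j k) \<le> \<bar>m j\<bar>" for k
    by (simp add: unit_seq_def)
  then show ?thesis
    unfolding True by (rule lp_infinity_bound(1))
next
  case False
  have "((\<lambda>k. norm (complex_of_real (m k) * unit_seq j k) powr real_of_ereal p) has_sum
      norm (complex_of_real (m j) * unit_seq j j) powr real_of_ereal p) UNIV"
    by (rule has_sum_single_support) (simp add: unit_seq_def)
  then show ?thesis
    using False unfolding lp_mem_def summable_on_def by auto
qed

lemma mat_mult_inv_matrix:
  assumes "invertible_on p m A"
  shows "mat_mult A (inv_matrix p m A) = mat_one"
proof (intro ext)
  fix i j
  let ?S = "{c. lp_mem p m c}"
  have "mat_apply A ` ?S = ?S"
    using assms unfolding invertible_on_def bij_betw_def by blast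
  then have "unit_seq j \<in> mat_apply A ` ?S"
    by (simp add: lp_mem_unit_seq)
  then have "mat_apply A (inv_into ?S (mat_apply A) (unit_seq j)) = unit_seq j"
    by (rule f_inv_into_f)
  moreover have "inv_into ?S (mat_apply A) (unit_seq j) = (\<lambda>k. inv_matrix p m A k j)"
    by (simp add: inv_matrix_def unit_seq_def)
  ultimately show "mat_mult A (inv_matrix p m A) i j = mat_one i j"
    by (simp add: mat_mult_column flip: mat_one_column)
qed

lemma mat_apply_right_inverse:
  assumes m: "pos_weight m" and X: "bounded_on \<infinity> m X" and Y: "bounded_on \<infinity> m Y"
    and XY: "mat_mult X Y = mat_one" and c: "lp_mem \<infinity> m c"
  shows "mat_apply X (mat_apply Y c) = c"
  using mat_apply_mat_mult[OF m X Y c] by (simp add: XY mat_apply_mat_one)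

lemma bounded_on_imp_lp_mem:
  "bounded_on p m A \<Longrightarrow> lp_mem p m c \<Longrightarrow> lp_mem p m (mat_apply A c)"
  unfolding bounded_on_def by blast

lemma mat_mult_left_inverse:
  assumes m: "pos_weight m" and p: "1 \<le> p"
    and inj: "inj_on (mat_apply A) {c. lp_mem p m c}"
    and A: "bounded_on p m A" "bounded_on \<infinity> m A"
    and C: "bounded_on p m C" "bounded_on \<infinity> m C"
    and AC: "mat_mult A C = mat_one"
  shows "mat_mult C A = mat_one"
proof (intro ext)
  fix i j
  have Ae: "lp_mem p m (mat_apply A (unit_seq j))"
    using bounded_on_imp_lp_mem[OF A(1) lp_mem_unit_seq] .
  define v where "v = mat_apply C (mat_apply A (unit_seq j))"
  have v: "lp_mem p m v"
    unfolding v_def using bounded_on_imp_lp_mem[OF C(1) Ae] .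
  have Av: "mat_apply A v = mat_apply A (unit_seq j)"
    unfolding v_def
    using mat_apply_right_inverse[OF m A(2) C(2) AC lp_mem_imp_lp_mem_infinity[OF p Ae]] .
  have "v = unit_seq j"
    using Av by (simp add: inj_on_eq_iff[OF inj] v lp_mem_unit_seq)
  have "mat_mult C A i j = v i"
    by (simp add: v_def mat_mult_column mat_apply_unit_seq)
  also have "\<dots> = mat_one i j"
    using \<open>v = unit_seq j\<close> by (simp add: mat_one_def unit_seq_def)
  finally show "mat_mult C A i j = mat_one i j" .
qed

lemma invertible_on_if_two_sided_inverse:
  assumes m: "pos_weight m" and p: "1 \<le> p"
    and A: "bounded_on p m A" "bounded_on \<infinity> m A"
    and C: "bounded_on p m C" "bounded_on \<infinity> m C"
    and AC: "mat_mult A C = mat_one" and CA: "mat_mult C A = mat_one"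
  shows "invertible_on p m A"
proof -
  define S where "S = {c. lp_mem p m c}"
  have C_A: "mat_apply C (mat_apply A c) = c" and A_C: "mat_apply A (mat_apply C c) = c"
    if "c \<in> S" for c
    using that lp_mem_imp_lp_mem_infinity[OF p] mat_apply_right_inverse[OF m C(2) A(2) CA]
      mat_apply_right_inverse[OF m A(2) C(2) AC] unfolding S_def by blast+
  have "bij_betw (mat_apply A) S S"
  proof (rule bij_betw_byWitness[where f' = "mat_apply C"])
    show "mat_apply A ` S \<subseteq> S" "mat_apply C ` S \<subseteq> S"
      using bounded_on_imp_lp_mem[OF A(1)] bounded_on_imp_lp_mem[OF C(1)] unfolding S_def by blast+
  qed (use C_A A_C in blast)+
  moreover obtain K where K:
    "\<forall>c. lp_mem p m c \<longrightarrow> lp_norm p m (mat_apply C c) \<le> K * lp_norm p m c"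
    using C(1) unfolding bounded_on_def by blast
  have "lp_norm p m c \<le> K * lp_norm p m (mat_apply A c)" if "lp_mem p m c" for c
  proof -
    have "lp_norm p m (mat_apply C (mat_apply A c)) \<le> K * lp_norm p m (mat_apply A c)"
      using K bounded_on_imp_lp_mem[OF A(1) that] by blast
    then show ?thesis
      using C_A that unfolding S_def by simp
  qed
  ultimately show ?thesis
    using A(1) unfolding invertible_on_def S_def by blast
qed

lemma ari_algebra_invertible_on:
  assumes ari: "ari_algebra \<A> nrm W"
    and A: "A \<in> \<A>" and invertible: "invertible_on 2 (\<lambda>k. 1) A"
    and p: "1 \<le> p" and m: "m \<in> W"
  shows "invertible_on p m A"
proof -
  define C where "C = inv_matrix 2 (\<lambda>k. 1) A"
  have "C \<in> \<A>"
    using ari A invertible unfolding ari_algebra_def C_def by blast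
  then have bounded: "bounded_on q w A" "bounded_on q w C" if "1 \<le> q" "w \<in> W" for q w
    using ari A that unfolding ari_algebra_def by blast+
  have one: "(\<lambda>k. 1) \<in> W" "pos_weight (\<lambda>k. 1)"
    using ari unfolding ari_algebra_def pos_weight_def by auto
  have two: "(1::ereal) \<le> 2" and infinity: "(1::ereal) \<le> \<infinity>"
    by simp_all
  have inj: "inj_on (mat_apply A) {c. lp_mem 2 (\<lambda>k. 1) c}"
    using invertible unfolding invertible_on_def bij_betw_def by blast
  have AC: "mat_mult A C = mat_one"
    unfolding C_def by (rule mat_mult_inv_matrix[OF invertible])
  moreover have "mat_mult C A = mat_one"
    using mat_mult_left_inverse[OF one(2) two inj bounded(1)[OF two one(1)]
        bounded(1)[OF infinity one(1)] bounded(2)[OF two one(1)] bounded(2)[OF infinity one(1)] AC] .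
  moreover have "pos_weight m"
    using ari m unfolding ari_algebra_def by blast
  ultimately show ?thesis
    using invertible_on_if_two_sided_inverse[OF _ p bounded(1)[OF p m] bounded(1)[OF infinity m]
        bounded(2)[OF p m] bounded(2)[OF infinity m]] by blast
qed

theorem mainTheorem1:
  fixes \<A> :: "('k::countable) mat set" and nrm :: "'k mat \<Rightarrow> real"
    and W :: "'k weight set" and \<mu> :: "'k weight" and B :: "'k mat"
  assumes "ari_algebra \<A> nrm W"
    and "\<mu> \<in> W"
    and "diag_conj \<mu> B \<in> \<A>"
    and "invertible_on 2 \<mu> B"
  shows "(\<forall>p::ereal. 1 \<le> p \<longrightarrow> (\<forall>m\<in>W. invertible_on p (\<lambda>k. \<mu> k * m k) B))
       \<and> (\<forall>p::ereal. 1 \<le> p \<longrightarrow> invertible_on p (\<lambda>k. 1) B)"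
proof -
  have \<mu>: "pos_weight \<mu>" and \<mu>_inverse: "(\<lambda>k. 1 / \<mu> k) \<in> W"
    using assms(1,2) unfolding ari_algebra_def by blast+
  have "pos_weight (\<lambda>k. 1 / \<mu> k)"
    using \<mu> unfolding pos_weight_def by simp
  then have "invertible_on 2 (\<lambda>k. 1 / \<mu> k * \<mu> k) (diag_conj \<mu> B)"
    by (rule invertible_on_diag_conj) (use assms(4) in \<open>simp add: diag_conj_inverse[OF \<mu>]\<close>)
  then have "invertible_on 2 (\<lambda>k. 1) (diag_conj \<mu> B)"
    using pos_weight_nonzero[OF \<mu>] by simp
  then have weighted: "invertible_on p (\<lambda>k. \<mu> k * m k) B" if "1 \<le> p" "m \<in> W" for p m
    using invertible_on_diag_conj[OF \<mu> ari_algebra_invertible_on[OF assms(1,3) _ that]] by blast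
  moreover have "invertible_on p (\<lambda>k. 1) B" if "1 \<le> p" for p
    using weighted[OF that \<mu>_inverse] pos_weight_nonzero[OF \<mu>] by simp
  ultimately show ?thesis
    by blast
qed

end
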